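(* Let $y$ be a $\lambda$-variable, $t$ a term, and $\sigma=[(x_i:=y)_{1\le i\le n};(a_j:=^*y)_{1\le j\le m}]$ for distinct $\lambda$-variables $x_1,\dots,x_n$ and distinct $\mu$-variables $a_1,\dots,a_m$. (1) If $(t\sigma\;y)$ is normalizable, then $t$ is normalizable. (2) If $t\sigma$ is normalizable, then $t$ is normalizable.
   Context: $\lambda\mu$-terms: $t::= x\mid \lambda x.t\mid (t\;t)\mid \mu a.t\mid (a\;t)$ over disjoint infinite sets of $\lambda$-variables and $\mu$-variables. Reduction $(\lambda x.u\;v)\triangleright u[x:=v]$, $(\mu a.u\;v)\triangleright\mu a.u[a:=^*v]$ ($u[a:=^*v]$ replaces each subterm $(a\;w)$ of $u$ by $(a\;(w\;v))$); a term is normalizable if it reduces (by the compatible closure of these rules) to a normal form. $t[(x_i:=y);(a_j:=^*y)]$ is obtained from $t$ by replacing each $x_i$ by $y$ and inductively each subterm $(a_j\;w)$ by $(a_j\;(w\;y))$. *)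

theory Defs
  imports Main
begin

text \<open>lambda-mu-terms in de Bruijn representation, with two separate index spaces:
  LVar i is the lambda-variable with index i (bound by Lam),
  Named a t is the named term (a t) for the mu-variable with index a (bound by Mu).
  Free variables are the indices exceeding the number of enclosing binders of the
  respective kind; alpha-equivalence is syntactic identity.\<close>

datatype trm = LVar nat | Lam trm | App trm trm | Mu trm | Named nat trm

fun liftL :: "nat \<Rightarrow> trm \<Rightarrow> trm" where
  "liftL k (LVar i) = (if i < k then LVar i else LVar (Suc i))"
| "liftL k (Lam t) = Lam (liftL (Suc k) t)"
| "liftL k (App t u) = App (liftL k t) (liftL k u)"
| "liftL k (Mu t) = Mu (liftL k t)"
| "liftL k (Named a t) = Named a (liftL k t)"

fun liftM :: "nat \<Rightarrow> trm \<Rightarrow> trm" where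
  "liftM k (LVar i) = LVar i"
| "liftM k (Lam t) = Lam (liftM k t)"
| "liftM k (App t u) = App (liftM k t) (liftM k u)"
| "liftM k (Mu t) = Mu (liftM (Suc k) t)"
| "liftM k (Named a t) = Named (if a < k then a else Suc a) (liftM k t)"

fun substL :: "trm \<Rightarrow> nat \<Rightarrow> trm \<Rightarrow> trm" where
  "substL (LVar i) k s = (if i < k then LVar i else if i = k then s else LVar (i - 1))"
| "substL (Lam t) k s = Lam (substL t (Suc k) (liftL 0 s))"
| "substL (App t u) k s = App (substL t k s) (substL u k s)"
| "substL (Mu t) k s = Mu (substL t k (liftM 0 s))"
| "substL (Named a t) k s = Named a (substL t k s)"

fun substM :: "trm \<Rightarrow> nat \<Rightarrow> trm \<Rightarrow> trm" where
  "substM (LVar i) k v = LVar i"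
| "substM (Lam t) k v = Lam (substM t k (liftL 0 v))"
| "substM (App t u) k v = App (substM t k v) (substM u k v)"
| "substM (Mu t) k v = Mu (substM t (Suc k) (liftM 0 v))"
| "substM (Named a t) k v =
     (if a = k then Named a (App (substM t k v) v) else Named a (substM t k v))"

inductive red1 :: "trm \<Rightarrow> trm \<Rightarrow> bool" where
  beta: "red1 (App (Lam u) v) (substL u 0 v)"
| mu: "red1 (App (Mu u) v) (Mu (substM u 0 (liftM 0 v)))"
| lam: "red1 t t' \<Longrightarrow> red1 (Lam t) (Lam t')"
| appL: "red1 t t' \<Longrightarrow> red1 (App t u) (App t' u)"
| appR: "red1 u u' \<Longrightarrow> red1 (App t u) (App t u')"
| muc: "red1 t t' \<Longrightarrow> red1 (Mu t) (Mu t')"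
| named: "red1 t t' \<Longrightarrow> red1 (Named a t) (Named a t')"

definition normal :: "trm \<Rightarrow> bool" where
  "normal t \<longleftrightarrow> (\<nexists>t'. red1 t t')"

definition normalizable :: "trm \<Rightarrow> bool" where
  "normalizable t \<longleftrightarrow> (\<exists>u. red1\<^sup>*\<^sup>* t u \<and> normal u)"

text \<open>Simultaneous substitution t[(x_i := y); (a_j :=* y)] for free lambda-variables
  xs, free mu-variables as and a free lambda-variable y; dl and dm count the enclosing
  lambda- and mu-binders.\<close>
fun sigma_aux :: "nat list \<Rightarrow> nat list \<Rightarrow> nat \<Rightarrow> nat \<Rightarrow> nat \<Rightarrow> trm \<Rightarrow> trm" where
  "sigma_aux xs as y dl dm (LVar i) =
     (if dl \<le> i \<and> i - dl \<in> set xs then LVar (y + dl) else LVar i)"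
| "sigma_aux xs as y dl dm (Lam t) = Lam (sigma_aux xs as y (Suc dl) dm t)"
| "sigma_aux xs as y dl dm (App t u) = App (sigma_aux xs as y dl dm t) (sigma_aux xs as y dl dm u)"
| "sigma_aux xs as y dl dm (Mu t) = Mu (sigma_aux xs as y dl (Suc dm) t)"
| "sigma_aux xs as y dl dm (Named a t) =
     (if dm \<le> a \<and> a - dm \<in> set as
      then Named a (App (sigma_aux xs as y dl dm t) (LVar (y + dl)))
      else Named a (sigma_aux xs as y dl dm t))"

definition sigma :: "nat list \<Rightarrow> nat list \<Rightarrow> nat \<Rightarrow> trm \<Rightarrow> trm" where
  "sigma xs as y t = sigma_aux xs as y 0 0 t"

end

theory Submission
  imports Defs
begin

text \<open>The substitution \<open>\<sigma>\<close> can be undone along reductions. We relate \<open>t\<close> to every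
  term obtained from \<open>t\<sigma>\<close> by contracting some of the redexes \<open>(a ((\<lambda>x.w) y))\<close> and
  \<open>(a ((\<mu>b.w) y))\<close> that \<open>\<sigma>\<close> creates. This relation is stable under substitution, so every
  reduction step on the right is matched by zero or more steps on the left (zero exactly
  when a created redex is contracted), and a right-hand side in normal form has a
  left-hand side in normal form. Hence a normalising reduction of \<open>t\<sigma>\<close> yields one of \<open>t\<close>.
  Part (1) follows, since \<open>(a (t\<sigma> y))\<close> is related to \<open>(a t)\<close> in the same way.\<close>

lemma rtranclp_map:
  assumes step: "\<And>x y. r x y \<Longrightarrow> r (f x) (f y)" and "r\<^sup>*\<^sup>* x y"
  shows "r\<^sup>*\<^sup>* (f x) (f y)"
  using assms(2) by induction (auto intro: rtranclp.rtrancl_into_rtrancl step)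

lemmas red1s_Lam = rtranclp_map[of red1 Lam, OF red1.lam]
lemmas red1s_Mu = rtranclp_map[of red1 Mu, OF red1.muc]
lemmas red1s_Named = rtranclp_map[of red1 "Named a" for a, OF red1.named]
lemmas red1s_AppL = rtranclp_map[of red1 "\<lambda>t. App t u" for u, OF red1.appL]
lemmas red1s_AppR = rtranclp_map[of red1 "App t" for t, OF red1.appR]

inductive_cases red1_LVarE: "red1 (LVar i) s"
inductive_cases red1_LamE: "red1 (Lam t) s"
inductive_cases red1_AppE [consumes 1, case_names beta mu appL appR]: "red1 (App t u) s"
inductive_cases red1_MuE: "red1 (Mu t) s"
inductive_cases red1_NamedE: "red1 (Named a t) s"

lemma red1s_NamedD: "red1\<^sup>*\<^sup>* (Named a t) w \<Longrightarrow> \<exists>w'. w = Named a w' \<and> red1\<^sup>*\<^sup>* t w'"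
proof (induction rule: rtranclp_induct)
  case (step w1 w2)
  then obtain w' where "w1 = Named a w'" "red1\<^sup>*\<^sup>* t w'" by blast
  with step.hyps(2) show ?case by (auto elim: red1_NamedE intro: rtranclp.rtrancl_into_rtrancl)
qed blast

lemma normal_Named_iff: "normal (Named a t) \<longleftrightarrow> normal t"
  unfolding normal_def by (auto elim: red1_NamedE intro: red1.named)

lemma normalizable_Named_iff: "normalizable (Named a t) \<longleftrightarrow> normalizable t"
  unfolding normalizable_def
  by (auto simp: normal_Named_iff dest!: red1s_NamedD intro: red1s_Named)

definition ren_under :: "(nat \<Rightarrow> nat) \<Rightarrow> nat \<Rightarrow> nat" where
  "ren_under f i = (case i of 0 \<Rightarrow> 0 | Suc j \<Rightarrow> Suc (f j))"

definition scons :: "nat \<Rightarrow> (nat \<Rightarrow> nat) \<Rightarrow> nat \<Rightarrow> nat" where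
  "scons y f i = (case i of 0 \<Rightarrow> y | Suc j \<Rightarrow> f j)"

definition unlift :: "nat \<Rightarrow> nat \<Rightarrow> nat" where
  "unlift k i = (if i < k then i else i - 1)"

fun ren :: "(nat \<Rightarrow> nat) \<Rightarrow> trm \<Rightarrow> trm" where
  "ren f (LVar i) = LVar (f i)"
| "ren f (Lam t) = Lam (ren (ren_under f) t)"
| "ren f (App t u) = App (ren f t) (ren f u)"
| "ren f (Mu t) = Mu (ren f t)"
| "ren f (Named a t) = Named a (ren f t)"

lemma liftL_eq_ren: "liftL k t = ren (\<lambda>i. if i < k then i else Suc i) t"
proof (induction t arbitrary: k)
  case (Lam t)
  have "ren_under (\<lambda>i. if i < k then i else Suc i) = (\<lambda>i. if i < Suc k then i else Suc i)"
    by (auto simp: ren_under_def fun_eq_iff split: nat.split)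
  with Lam show ?case by simp
qed auto

lemma substL_LVar_eq_ren:
  "substL t k (LVar j) = ren (\<lambda>i. if i < k then i else if i = k then j else i - 1) t"
proof (induction t arbitrary: k j)
  case (Lam t)
  have "ren_under (\<lambda>i. if i < k then i else if i = k then j else i - 1)
      = (\<lambda>i. if i < Suc k then i else if i = Suc k then Suc j else i - 1)"
    by (auto simp: ren_under_def fun_eq_iff split: nat.split)
  with Lam show ?case by simp
qed auto

text \<open>Substituting for index \<open>k\<close> on the left and for \<open>k'\<close> on the right commutes with the
  renamings when \<open>g\<close> sends exactly \<open>k\<close> to \<open>k'\<close> and, once these indices are removed, becomes \<open>f\<close>.\<close>

definition subst_compat :: "(nat \<Rightarrow> nat) \<Rightarrow> nat \<Rightarrow> (nat \<Rightarrow> nat) \<Rightarrow> nat \<Rightarrow> bool" where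
  "subst_compat g k f k' \<longleftrightarrow>
     g k = k' \<and> (\<forall>i. i \<noteq> k \<longrightarrow> g i \<noteq> k' \<and> f (unlift k i) = unlift k' (g i))"

lemma subst_compat_ren_under:
  "subst_compat g k f k' \<Longrightarrow> subst_compat (ren_under g) (Suc k) (ren_under f) (Suc k')"
  unfolding subst_compat_def
  by (auto simp: ren_under_def unlift_def split: nat.split)

lemma subst_compat_scons:
  "subst_compat g k f k' \<Longrightarrow> z \<noteq> k' \<Longrightarrow>
   subst_compat (scons z g) (Suc k) (scons (unlift k' z) f) k'"
  unfolding subst_compat_def
  by (auto simp: scons_def unlift_def split: nat.split)

subsection \<open>The relation between a term and its images\<close>

text \<open>\<open>inst_rel f y A t s\<close>: the free lambda-variables of \<open>t\<close> are renamed by \<open>f\<close> (which sends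
  the \<open>x\<^sub>i\<close> to \<open>y\<close>), each \<open>(a w)\<close> with \<open>a \<in> A\<close> may become \<open>(a (w y))\<close>, and rules \<open>nlam\<close>
  and \<open>nmu\<close> record that the redex \<open>(\<lambda>x.w) y\<close> resp. \<open>(\<mu>b.w) y\<close> so created has been contracted.\<close>

inductive inst_rel :: "(nat \<Rightarrow> nat) \<Rightarrow> nat \<Rightarrow> nat set \<Rightarrow> trm \<Rightarrow> trm \<Rightarrow> bool" where
  var: "inst_rel f y A (LVar i) (LVar (f i))"
| lam: "inst_rel (ren_under f) (Suc y) A t s \<Longrightarrow> inst_rel f y A (Lam t) (Lam s)"
| app: "inst_rel f y A t s \<Longrightarrow> inst_rel f y A u v \<Longrightarrow> inst_rel f y A (App t u) (App s v)"
| mu: "inst_rel f y (Suc ` A) t s \<Longrightarrow> inst_rel f y A (Mu t) (Mu s)"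
| named: "inst_rel f y A t s \<Longrightarrow> inst_rel f y A (Named a t) (Named a s)"
| nap: "a \<in> A \<Longrightarrow> inst_rel f y A t s \<Longrightarrow> inst_rel f y A (Named a t) (Named a (App s (LVar y)))"
| nlam: "a \<in> A \<Longrightarrow> inst_rel (scons y f) y A t s \<Longrightarrow> inst_rel f y A (Named a (Lam t)) (Named a s)"
| nmu: "a \<in> A \<Longrightarrow> inst_rel f y (insert 0 (Suc ` A)) t s \<Longrightarrow>
    inst_rel f y A (Named a (Mu t)) (Named a (Mu s))"

inductive_cases inst_rel_LamE: "inst_rel f y A t (Lam N)"
inductive_cases inst_rel_MuE: "inst_rel f y A t (Mu N)"
inductive_cases inst_rel_Lam_leftE: "inst_rel f y A (Lam M) s"
inductive_cases inst_rel_Mu_leftE: "inst_rel f y A (Mu M) s"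

lemma inst_rel_mono: "inst_rel f y A t s \<Longrightarrow> A \<subseteq> B \<Longrightarrow> inst_rel f y B t s"
proof (induction arbitrary: B rule: inst_rel.induct)
  case (mu f y A t s) then show ?case by (auto intro!: inst_rel.mu)
next
  case (nmu a A f y t s) then show ?case by (auto intro!: inst_rel.nmu)
qed (auto intro: inst_rel.intros)

lemma inst_rel_ren_right:
  "inst_rel f y A t s \<Longrightarrow> inst_rel (h \<circ> f) (h y) A t (ren h s)"
proof (induction arbitrary: h rule: inst_rel.induct)
  case (var f y A i) then show ?case using inst_rel.var[of "h \<circ> f" "h y" A i] by (simp add: comp_def)
next
  case (lam f y A t s)
  have "ren_under h \<circ> ren_under f = ren_under (h \<circ> f)"
    by (auto simp: ren_under_def fun_eq_iff split: nat.split)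
  moreover have "ren_under h (Suc y) = Suc (h y)" by (simp add: ren_under_def)
  ultimately show ?case using lam.IH[of "ren_under h"] by (auto intro!: inst_rel.lam simp: comp_def)
next
  case (nlam a A y f t s)
  have "h \<circ> scons y f = scons (h y) (h \<circ> f)"
    by (auto simp: scons_def fun_eq_iff split: nat.split)
  then show ?case using nlam.IH[of h] nlam.hyps by (auto intro!: inst_rel.nlam simp: comp_def)
qed (auto intro: inst_rel.intros)

lemma inst_rel_ren_left:
  "inst_rel f y A t s \<Longrightarrow> (\<And>i. g (p i) = f i) \<Longrightarrow> inst_rel g y A (ren p t) s"
proof (induction arbitrary: g p rule: inst_rel.induct)
  case (var f y A i) then show ?case using inst_rel.var[of g y A "p i"] by simp
next
  case (lam f y A t s)
  have "ren_under g (ren_under p i) = ren_under f i" for i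
    using lam.prems by (simp add: ren_under_def split: nat.split)
  then show ?case using lam.IH by (auto intro!: inst_rel.lam)
next
  case (nlam a A y f t s)
  have "scons y g (ren_under p i) = scons y f i" for i
    using nlam.prems by (simp add: ren_under_def scons_def split: nat.split)
  then show ?case using nlam by (auto intro!: inst_rel.nlam)
qed (auto intro: inst_rel.intros)

lemma inst_rel_liftL:
  assumes "inst_rel f y A u v"
  shows "inst_rel (ren_under f) (Suc y) A (liftL 0 u) (liftL 0 v)"
proof -
  have "inst_rel (Suc \<circ> f) (Suc y) A u (ren Suc v)"
    using inst_rel_ren_right[OF assms, of Suc] by simp
  then have "inst_rel (ren_under f) (Suc y) A (ren Suc u) (ren Suc v)"
    by (rule inst_rel_ren_left) (simp add: ren_under_def)
  then show ?thesis by (simp add: liftL_eq_ren)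
qed

lemma inst_rel_liftL_left: "inst_rel f y A u v \<Longrightarrow> inst_rel (scons z f) y A (liftL 0 u) v"
  unfolding liftL_eq_ren by (erule inst_rel_ren_left) (simp add: scons_def)

lemma inst_rel_liftM:
  "inst_rel f y A u v \<Longrightarrow> \<forall>a\<in>A. (if a < k then a else Suc a) \<in> B \<Longrightarrow>
   inst_rel f y B (liftM k u) (liftM k v)"
proof (induction arbitrary: k B rule: inst_rel.induct)
  case (mu f y A t s)
  have "\<forall>a\<in>Suc ` A. (if a < Suc k then a else Suc a) \<in> Suc ` B"
    using mu.prems by auto
  then show ?case using mu.IH by (auto intro!: inst_rel.mu)
next
  case (nap a A f y t s) then show ?case by (auto intro!: inst_rel.nap)
next
  case (nlam a A y f t s) then show ?case by (auto intro!: inst_rel.nlam)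
next
  case (nmu a A f y t s)
  have "\<forall>c\<in>insert 0 (Suc ` A). (if c < Suc k then c else Suc c) \<in> insert 0 (Suc ` B)"
    using nmu.prems by auto
  then show ?case using nmu by (auto intro!: inst_rel.nmu)
qed (auto intro: inst_rel.intros)

lemma inst_rel_liftM0: "inst_rel f y A u v \<Longrightarrow> inst_rel f y (Suc ` A) (liftM 0 u) (liftM 0 v)"
  by (erule inst_rel_liftM) auto

subsection \<open>Stability under substitution\<close>

lemma inst_rel_substL:
  "inst_rel g z A M N \<Longrightarrow> inst_rel f (unlift k' z) A u v \<Longrightarrow>
   subst_compat g k f k' \<Longrightarrow> z \<noteq> k' \<Longrightarrow>
   inst_rel f (unlift k' z) A (substL M k u) (substL N k' v)"
proof (induction arbitrary: f k k' u v rule: inst_rel.induct)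
  case (var g z A i)
  show ?case
  proof (cases "i = k")
    case False
    with var.prems(2) have gi: "g i \<noteq> k'" and f: "f (unlift k i) = unlift k' (g i)"
      by (auto simp: subst_compat_def)
    have "substL (LVar i) k u = LVar (unlift k i)" "substL (LVar (g i)) k' v = LVar (unlift k' (g i))"
      using False gi by (simp_all add: unlift_def)
    then show ?thesis using inst_rel.var[of f "unlift k' z" A "unlift k i"] f by simp
  qed (use var.prems in \<open>simp add: subst_compat_def\<close>)
next
  case (lam g z A t s)
  have z: "unlift (Suc k') (Suc z) = Suc (unlift k' z)"
    using lam.prems(3) by (auto simp: unlift_def)
  have "inst_rel (ren_under f) (unlift (Suc k') (Suc z)) A
      (substL t (Suc k) (liftL 0 u)) (substL s (Suc k') (liftL 0 v))"
    using lam.IH[OF _ subst_compat_ren_under[OF lam.prems(2)]] lam.prems(3)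
      inst_rel_liftL[OF lam.prems(1)] by (simp add: z)
  then show ?case unfolding z substL.simps by (rule inst_rel.lam)
next
  case (mu g z A t s)
  then show ?case by (simp add: inst_rel.mu inst_rel_liftM0)
next
  case (nap a A g z t s)
  have "substL (LVar z) k' v = LVar (unlift k' z)" using nap.prems(3) by (simp add: unlift_def)
  with nap show ?case by (simp add: inst_rel.nap)
next
  case (nlam a A z g t s)
  have "inst_rel (scons (unlift k' z) f) (unlift k' z) A (substL t (Suc k) (liftL 0 u)) (substL s k' v)"
    using nlam.IH[OF inst_rel_liftL_left[OF nlam.prems(1)] subst_compat_scons[OF nlam.prems(2-3)]]
      nlam.prems(3) .
  then show ?case by (simp add: inst_rel.nlam[OF nlam.hyps(1)])
next
  case (nmu a A g z t s)
  have "inst_rel f (unlift k' z) (insert 0 (Suc ` A)) (liftM 0 u) (liftM 0 v)"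
    using inst_rel_liftM0[OF nmu.prems(1)] by (rule inst_rel_mono) auto
  from nmu.IH[OF this nmu.prems(2-3)] show ?case using nmu.hyps by (simp add: inst_rel.nmu)
qed (auto intro: inst_rel.intros)

lemma inst_rel_substL0:
  assumes "inst_rel (ren_under f) (Suc y) A M N" and "inst_rel f y A u v"
  shows "inst_rel f y A (substL M 0 u) (substL N 0 v)"
proof -
  have "subst_compat (ren_under f) 0 f 0"
    by (auto simp: subst_compat_def ren_under_def unlift_def split: nat.split)
  with assms show ?thesis
    using inst_rel_substL[of "ren_under f" "Suc y" A M N f 0 u v 0] by (simp add: unlift_def)
qed

lemma inst_rel_substL_LVar:
  assumes "inst_rel (ren_under f) (Suc y) A M N"
  shows "inst_rel (scons y f) y A M (substL N 0 (LVar y))"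
proof -
  let ?h = "\<lambda>i. if i < 0 then i else if i = 0 then y else i - 1"
  have "?h \<circ> ren_under f = scons y f"
    by (auto simp: ren_under_def scons_def fun_eq_iff split: nat.split)
  then show ?thesis
    using inst_rel_ren_right[OF assms, of ?h] by (simp add: substL_LVar_eq_ren)
qed

lemma inst_rel_substM:
  "inst_rel f y A M N \<Longrightarrow> inst_rel f y A u v \<Longrightarrow> k \<notin> A \<Longrightarrow>
   inst_rel f y A (substM M k u) (substM N k v)"
proof (induction arbitrary: k u v rule: inst_rel.induct)
  case (lam f y A t s)
  then show ?case by (auto intro!: inst_rel.lam inst_rel_liftL)
next
  case (mu f y A t s)
  have "Suc k \<notin> Suc ` A" using mu.prems(2) by auto
  with mu show ?case by (auto intro!: inst_rel.mu inst_rel_liftM0)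
next
  case (named f y A t s a)
  then show ?case by (auto intro!: inst_rel.named inst_rel.app)
next
  case (nap a A f y t s)
  then show ?case by (auto intro!: inst_rel.nap)
next
  case (nlam a A y f t s)
  then show ?case by (auto intro!: inst_rel.nlam inst_rel_liftL_left)
next
  case (nmu a A f y t s)
  have "inst_rel f y (insert 0 (Suc ` A)) (liftM 0 u) (liftM 0 v)"
    using inst_rel_liftM0[OF nmu.prems(1)] by (rule inst_rel_mono) auto
  with nmu show ?case by (auto intro!: inst_rel.nmu)
qed (auto intro: inst_rel.intros)

lemma inst_rel_substM0:
  assumes "inst_rel f y (Suc ` A) M N" and "inst_rel f y A u v"
  shows "inst_rel f y (Suc ` A) (substM M 0 (liftM 0 u)) (substM N 0 (liftM 0 v))"
  using assms(1) inst_rel_liftM0[OF assms(2)] by (rule inst_rel_substM) auto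

lemma inst_rel_substM_LVar:
  "inst_rel f y A M N \<Longrightarrow> k \<notin> A \<Longrightarrow> inst_rel f y (insert k A) M (substM N k (LVar y))"
proof (induction arbitrary: k rule: inst_rel.induct)
  case (mu f y A t s)
  have "Suc k \<notin> Suc ` A" using mu.prems by auto
  with mu.IH show ?case by (auto intro!: inst_rel.mu)
next
  case (named f y A t s a)
  then show ?case by (auto intro: inst_rel.nap inst_rel.named)
next
  case (nmu a A f y t s)
  then have "inst_rel f y (insert (Suc k) (insert 0 (Suc ` A))) t (substM s (Suc k) (LVar y))"
    by auto
  with nmu show ?case by (auto simp: insert_commute intro!: inst_rel.nmu)
qed (auto intro: inst_rel.intros)

subsection \<open>Simulation\<close>

lemma inst_rel_reducible: "inst_rel f y A t s \<Longrightarrow> red1 t t' \<Longrightarrow> \<exists>s'. red1 s s'"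
proof (induction arbitrary: t' rule: inst_rel.induct)
  case (app f y A t s u v)
  from app.prems show ?case
  proof (cases rule: red1_AppE)
    case (beta M)
    with app.hyps(1) show ?thesis by (auto elim: inst_rel_Lam_leftE intro: red1.beta)
  next
    case (mu M)
    with app.hyps(1) show ?thesis by (auto elim: inst_rel_Mu_leftE intro: red1.mu)
  qed (use app.IH in \<open>blast intro: red1.appL red1.appR\<close>)+
qed (blast elim: red1_LVarE red1_LamE red1_MuE red1_NamedE
        intro: red1.lam red1.muc red1.named red1.appL)+

lemma inst_rel_normal: "inst_rel f y A t s \<Longrightarrow> normal s \<Longrightarrow> normal t"
  unfolding normal_def using inst_rel_reducible by blast

lemma inst_rel_simulation:
  "inst_rel f y A t s \<Longrightarrow> red1 s s' \<Longrightarrow> \<exists>t'. red1\<^sup>*\<^sup>* t t' \<and> inst_rel f y A t' s'"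
proof (induction arbitrary: s' rule: inst_rel.induct)
  case (app f y A t s u v)
  from app.prems show ?case
  proof (cases rule: red1_AppE)
    case (beta N)
    with app.hyps(1) obtain M where "t = Lam M" "inst_rel (ren_under f) (Suc y) A M N"
      by (auto elim: inst_rel_LamE)
    with beta app.hyps(2) show ?thesis by (blast intro: red1.beta inst_rel_substL0)
  next
    case (mu N)
    with app.hyps(1) obtain M where "t = Mu M" "inst_rel f y (Suc ` A) M N"
      by (auto elim: inst_rel_MuE)
    with mu app.hyps(2) show ?thesis by (blast intro: red1.mu inst_rel.mu inst_rel_substM0)
  qed (use app in \<open>blast intro: red1s_AppL red1s_AppR inst_rel.app\<close>)+
next
  case (nap a A f y t s)
  from nap.prems obtain s1 where s': "s' = Named a s1" "red1 (App s (LVar y)) s1"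
    by (auto elim: red1_NamedE)
  from s'(2) show ?case
  proof (cases rule: red1_AppE)
    case (beta N)
    with nap.hyps(2) obtain M where "t = Lam M" "inst_rel (ren_under f) (Suc y) A M N"
      by (auto elim: inst_rel_LamE)
    with beta s'(1) nap.hyps(1) show ?thesis by (blast intro: inst_rel.nlam inst_rel_substL_LVar)
  next
    case (mu N)
    with nap.hyps(2) obtain M where "t = Mu M" "inst_rel f y (Suc ` A) M N"
      by (auto elim: inst_rel_MuE)
    with mu s'(1) nap.hyps(1) show ?thesis
      by (auto intro!: inst_rel.nmu inst_rel_substM_LVar)
  next
    case (appL s2)
    with nap s'(1) show ?thesis by (blast intro: red1s_Named inst_rel.nap)
  qed (auto elim: red1_LVarE)
qed (blast elim: red1_LVarE red1_LamE red1_MuE red1_NamedE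
        intro: red1s_Lam red1s_Mu red1s_Named inst_rel.intros)+

lemma inst_rel_normalizable: "inst_rel f y A t s \<Longrightarrow> normalizable s \<Longrightarrow> normalizable t"
proof -
  assume "inst_rel f y A t s" "normalizable s"
  then obtain u where "red1\<^sup>*\<^sup>* s u" "normal u" unfolding normalizable_def by blast
  then show "normalizable t" using \<open>inst_rel f y A t s\<close>
  proof (induction arbitrary: t rule: converse_rtranclp_induct)
    case base
    then show ?case using inst_rel_normal unfolding normalizable_def by blast
  next
    case (step s s1)
    then obtain t1 where "red1\<^sup>*\<^sup>* t t1" "inst_rel f y A t1 s1" using inst_rel_simulation by blast
    with step.IH step.prems(1) show ?case unfolding normalizable_def by (meson rtranclp_trans)
  qed
qed

definition sigma_ren :: "nat list \<Rightarrow> nat \<Rightarrow> nat \<Rightarrow> nat \<Rightarrow> nat" where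
  "sigma_ren xs y dl i = (if dl \<le> i \<and> i - dl \<in> set xs then y + dl else i)"

definition sigma_names :: "nat list \<Rightarrow> nat \<Rightarrow> nat set" where
  "sigma_names as dm = {a. dm \<le> a \<and> a - dm \<in> set as}"

lemma sigma_aux_inst_rel:
  "inst_rel (sigma_ren xs y dl) (y + dl) (sigma_names as dm) t (sigma_aux xs as y dl dm t)"
proof (induction t arbitrary: dl dm)
  case (LVar i)
  have "sigma_aux xs as y dl dm (LVar i) = LVar (sigma_ren xs y dl i)"
    by (simp add: sigma_ren_def)
  then show ?case by (simp add: inst_rel.var)
next
  case (Lam t)
  have "ren_under (sigma_ren xs y dl) = sigma_ren xs y (Suc dl)"
    by (auto simp: ren_under_def sigma_ren_def fun_eq_iff split: nat.split)
  with Lam[of "Suc dl" dm] show ?case by (simp add: inst_rel.lam)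
next
  case (Mu t)
  have "sigma_names as (Suc dm) \<subseteq> Suc ` sigma_names as dm"
  proof
    fix a assume "a \<in> sigma_names as (Suc dm)"
    then have "a = Suc (a - 1)" "a - 1 \<in> sigma_names as dm" by (auto simp: sigma_names_def)
    then show "a \<in> Suc ` sigma_names as dm" by (metis imageI)
  qed
  with Mu[of dl "Suc dm"] show ?case by (auto intro: inst_rel.mu inst_rel_mono)
qed (auto simp: sigma_names_def intro: inst_rel.intros)

theorem mainTheorem12:
  fixes t :: trm and y :: nat and xs as :: "nat list"
  assumes "distinct xs" and "distinct as"
  shows "(normalizable (App (sigma xs as y t) (LVar y)) \<longrightarrow> normalizable t)
       \<and> (normalizable (sigma xs as y t) \<longrightarrow> normalizable t)"
proof -
  let ?f = "sigma_ren xs y 0" and ?A = "sigma_names as 0"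
  have \<sigma>: "inst_rel ?f y ?A t (sigma xs as y t)"
    using sigma_aux_inst_rel[of xs y 0 as 0 t] by (simp add: sigma_def)
  then have \<sigma>_app:
    "inst_rel ?f y (insert 0 ?A) (Named 0 t) (Named 0 (App (sigma xs as y t) (LVar y)))"
    by (auto intro: inst_rel.nap inst_rel_mono)
  show ?thesis
    using inst_rel_normalizable[OF \<sigma>] inst_rel_normalizable[OF \<sigma>_app]
    by (simp add: normalizable_Named_iff)
qed

end
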